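(* Let $i,j$ be integers with $0\leq j\leq i$. Then, as an identity of polynomials in $q$ (equivalently, of formal power series in $q$), $$\sum_{k=0}^{j}(q^{i-k+1};q)_k\,{j\brack k}\, q^{(i-k)(j-k)}=\sum_{\lambda\in O(i,j)}(-1)^{ol(\lambda)}\,q^{|\lambda|+ol(\lambda)\,(i-\ell(\lambda)+1)}\,q^{(i-\ell(\lambda))(j-\ell(\lambda))},$$ where $O(i,j)$ is the set of overpartitions defined in the context.
   Context: For $k\geq 1$, $(a;q)_k=(1-a)(1-aq)\cdots(1-aq^{k-1})$ and $(a;q)_0=1$; ${j\brack k}=\frac{(q;q)_j}{(q;q)_k(q;q)_{j-k}}$ is the Gaussian (q-binomial) coefficient. An overpartition with $k$ nonnegative parts is a sequence $\lambda=(\lambda_1,\dots,\lambda_k)$ of integers with $\lambda_1\geq\lambda_2\geq\cdots\geq\lambda_k\geq 0$ in which the first occurrence (leftmost position) of each value may or may not be marked as "overlined" (the value $0$ may also be overlined); thus overlined parts have distinct values. Its size is $|\lambda|=\sum_r\lambda_r$, its length $\ell(\lambda)=k$ counts all parts including zeros, and $ol(\lambda)$ is the number of overlined parts. For $0\leq k\leq j$, $O(i,j,k)$ denotes the set of overpartitions $\lambda$ with exactly $k$ nonnegative parts such that (1) every part is at most $j-1$; and (2) when $k\geq 2$, for each $1\leq s\leq k-1$ and each position $r$ with $\lambda_r=j-s$, at least $k-s$ of the parts $\lambda_{r+1},\dots,\lambda_k$ are overlined. (The paper also views each overline of an element of $O(i,j,k)$ as carrying weight $i-k+1$; this weight appears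 as the factor $i-\ell(\lambda)+1$ in the exponent.) $O(i,0,0)$ consists only of the empty partition, and $O(i,j)=\biguplus_{k=0}^{j}O(i,j,k)$. *)

theory Defs
  imports "HOL-Computational_Algebra.Polynomial"
begin

definition qX :: "int poly" where "qX = [:0, 1:]"

definition qpoch :: "int poly \<Rightarrow> nat \<Rightarrow> int poly" where
  "qpoch a k = (\<Prod>m<k. 1 - a * qX ^ m)"

text \<open>Gaussian binomial coefficient [j choose k] = (q;q)_j / ((q;q)_k (q;q)_(j-k)) (exact division).\<close>
definition qbinom :: "nat \<Rightarrow> nat \<Rightarrow> int poly" where
  "qbinom j k = qpoch qX j div (qpoch qX k * qpoch qX (j - k))"

text \<open>An overpartition with nonnegative parts: a list of (value, overlined) pairs,
  values weakly decreasing, and only the first (leftmost) occurrence of a value may be overlined.\<close>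
definition is_overpartition :: "(nat \<times> bool) list \<Rightarrow> bool" where
  "is_overpartition lam \<longleftrightarrow>
     (\<forall>r. Suc r < length lam \<longrightarrow> fst (lam ! r) \<ge> fst (lam ! Suc r)) \<and>
     (\<forall>r < length lam. snd (lam ! r) \<longrightarrow> (\<forall>r' < r. fst (lam ! r') \<noteq> fst (lam ! r)))"

definition op_size :: "(nat \<times> bool) list \<Rightarrow> nat" where
  "op_size lam = (\<Sum>p\<leftarrow>lam. fst p)"

definition op_ol :: "(nat \<times> bool) list \<Rightarrow> nat" where
  "op_ol lam = length (filter snd lam)"

text \<open>O(i,j,k) (0-based positions; it does not actually depend on i).\<close>
definition O_set :: "nat \<Rightarrow> nat \<Rightarrow> nat \<Rightarrow> (nat \<times> bool) list set" where
  "O_set i j k = {lam. is_overpartition lam \<and> length lam = k \<and>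
      (\<forall>r < k. fst (lam ! r) < j) \<and>
      (k \<ge> 2 \<longrightarrow> (\<forall>s \<in> {1..k-1}. \<forall>r < k. fst (lam ! r) = j - s \<longrightarrow>
          card {r'. r < r' \<and> r' < k \<and> snd (lam ! r')} \<ge> k - s))}"

definition O_all :: "nat \<Rightarrow> nat \<Rightarrow> (nat \<times> bool) list set" where
  "O_all i j = (\<Union>k\<in>{0..j}. O_set i j k)"

end

theory Submission
  imports Defs
begin

text \<open>Condition (2) on \<open>O(i,j,k)\<close> says that every part satisfies
  \<open>\<lambda>\<^sub>r + k \<le> j + #{overlined parts after r}\<close>. Weighting each overline by \<open>a\<close> and the
  size by \<open>q\<close>, the generating function \<open>F(j,k)\<close> of such overpartitions satisfies
  \<open>F(j+1,k+1) = q\<^sup>k\<^sup>+\<^sup>1 F(j,k+1) + (1 + a q\<^sup>k) F(j,k)\<close>: either all parts are positive and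
  are lowered by one, or the last part is a zero, which is simply dropped if it is plain, and
  dropped after lowering the (necessarily positive) other parts if it is overlined. By the
  q-Pascal rule \<open>[j,k] (-a;q)\<^sub>k\<close> obeys the same recurrence, and \<open>a = -q\<^sup>i\<^sup>-\<^sup>k\<^sup>+\<^sup>1\<close> turns
  the \<open>k\<close>-th term on the left into the sum over \<open>O(i,j,k)\<close>.\<close>

fun gauss_binom :: "nat \<Rightarrow> nat \<Rightarrow> int poly" where
  "gauss_binom j 0 = 1"
| "gauss_binom 0 (Suc k) = 0"
| "gauss_binom (Suc j) (Suc k) = gauss_binom j k + qX ^ Suc k * gauss_binom j (Suc k)"

lemma gauss_binom_eq_0: "j < k \<Longrightarrow> gauss_binom j k = 0"
  by (induction j k rule: gauss_binom.induct) auto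

lemma gauss_binom_diag: "gauss_binom j j = 1"
  by (induction j) (auto simp: gauss_binom_eq_0)

lemma qpoch_qX_Suc: "qpoch qX (Suc n) = qpoch qX n * (1 - qX ^ Suc n)"
  by (simp add: qpoch_def)

lemma qpoch_qX_nonzero: "qpoch qX n \<noteq> 0"
proof -
  have "poly (qpoch qX n) 0 = 1"
    by (simp add: qpoch_def qX_def poly_prod)
  then show ?thesis by auto
qed

lemma qpoch_qX_split:
  "k \<le> j \<Longrightarrow> gauss_binom j k * qpoch qX k * qpoch qX (j - k) = qpoch qX j"
proof (induction j arbitrary: k)
  case 0
  then show ?case by (simp add: qpoch_def)
next
  case (Suc j)
  show ?case
  proof (cases k)
    case 0
    then show ?thesis by (simp add: qpoch_def)
  next
    case (Suc m)
    with Suc.prems consider "m = j" | "m < j" by linarith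
    then show ?thesis
    proof cases
      case 1
      then show ?thesis using Suc
        by (simp add: qpoch_qX_Suc gauss_binom_diag gauss_binom_eq_0 qpoch_def[of _ 0])
    next
      case 2
      have IH_m: "gauss_binom j m * qpoch qX m * qpoch qX (j - m) = qpoch qX j"
        using Suc.IH[of m] 2 by simp
      have IH_Suc_m: "gauss_binom j (Suc m) * qpoch qX (Suc m) * qpoch qX (j - Suc m) = qpoch qX j"
        using Suc.IH[of "Suc m"] 2 by simp
      have j_minus_m: "j - m = Suc (j - Suc m)" and exp: "Suc m + (j - m) = Suc j"
        using 2 by simp_all
      have "gauss_binom (Suc j) (Suc m) * qpoch qX (Suc m) * qpoch qX (Suc j - Suc m)
          = (gauss_binom j m * qpoch qX m * qpoch qX (j - m)) * (1 - qX ^ Suc m)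
            + qX ^ Suc m * (gauss_binom j (Suc m) * qpoch qX (Suc m) * qpoch qX (j - Suc m))
              * (1 - qX ^ (j - m))"
        by (simp add: qpoch_qX_Suc j_minus_m algebra_simps)
      also have "\<dots> = qpoch qX j * (1 - qX ^ (Suc m + (j - m)))"
        unfolding IH_m IH_Suc_m by (simp add: power_add algebra_simps)
      also have "\<dots> = qpoch qX (Suc j)"
        unfolding exp qpoch_qX_Suc ..
      finally show ?thesis using Suc by simp
    qed
  qed
qed

lemma qbinom_eq_gauss_binom: "k \<le> j \<Longrightarrow> qbinom j k = gauss_binom j k"
  unfolding qbinom_def qpoch_qX_split[of k j, symmetric, unfolded mult.assoc]
  by (simp add: qpoch_qX_nonzero)

definition ol_after :: "(nat \<times> bool) list \<Rightarrow> nat \<Rightarrow> nat" where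
  "ol_after lam r = card {r'. r < r' \<and> r' < length lam \<and> snd (lam ! r')}"

lemma ol_after_le: "ol_after lam r \<le> length lam - Suc r"
proof -
  have "ol_after lam r \<le> card {Suc r..<length lam}"
    unfolding ol_after_def by (rule card_mono) auto
  then show ?thesis by simp
qed

lemma ol_after_map:
  assumes "\<And>x. snd (f x) = snd x"
  shows "ol_after (map f lam) r = ol_after lam r"
proof -
  have "{r'. r < r' \<and> r' < length lam \<and> snd (map f lam ! r')}
      = {r'. r < r' \<and> r' < length lam \<and> snd (lam ! r')}"
    using assms by (metis (lifting) nth_map)
  then show ?thesis unfolding ol_after_def by simp
qed

lemma ol_after_snoc:
  assumes "r < length lam"
  shows "ol_after (lam @ [x]) r = ol_after lam r + (if snd x then 1 else 0)"
proof -
  let ?S = "{r'. r < r' \<and> r' < length lam \<and> snd (lam ! r')}"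
  have "{r'. r < r' \<and> r' < length (lam @ [x]) \<and> snd ((lam @ [x]) ! r')}
       = ?S \<union> (if snd x then {length lam} else {})"
    using assms by (auto simp: nth_append less_Suc_eq)
  moreover have "finite ?S" "length lam \<notin> ?S" by auto
  ultimately show ?thesis unfolding ol_after_def by auto
qed

definition shift_part :: "nat \<times> bool \<Rightarrow> nat \<times> bool" where
  "shift_part x = (Suc (fst x), snd x)"

definition unshift_part :: "nat \<times> bool \<Rightarrow> nat \<times> bool" where
  "unshift_part x = (fst x - 1, snd x)"

lemma shift_unshift_parts: "\<forall>x\<in>set xs. 0 < fst x \<Longrightarrow> map shift_part (map unshift_part xs) = xs"
  by (induction xs) (auto simp: shift_part_def unshift_part_def)

lemma inj_map_shift_part: "inj (map shift_part)"
  by (rule inj_mapI) (auto simp: inj_def shift_part_def prod_eq_iff)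

lemma is_overpartition_nth_antimono:
  assumes "is_overpartition lam" "r \<le> r'" "r' < length lam"
  shows "fst (lam ! r') \<le> fst (lam ! r)"
  using assms(2,3)
proof (induction r' rule: dec_induct)
  case (step n)
  then have "fst (lam ! Suc n) \<le> fst (lam ! n)"
    using assms(1) unfolding is_overpartition_def by auto
  with step show ?case by simp
qed simp

lemma is_overpartition_map_shift: "is_overpartition (map shift_part lam) \<longleftrightarrow> is_overpartition lam"
  unfolding is_overpartition_def by (simp add: shift_part_def)

lemma is_overpartition_snocD: "is_overpartition (lam @ [x]) \<Longrightarrow> is_overpartition lam"
proof -
  assume snoc: "is_overpartition (lam @ [x])"
  show ?thesis
    unfolding is_overpartition_def
  proof (intro conjI allI impI)
    fix r assume r: "Suc r < length lam"
    then have "fst ((lam @ [x]) ! Suc r) \<le> fst ((lam @ [x]) ! r)"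
      using snoc unfolding is_overpartition_def by simp
    then show "fst (lam ! Suc r) \<le> fst (lam ! r)"
      using r by (simp add: nth_append)
  next
    fix r r' assume r: "r < length lam" "snd (lam ! r)" "r' < r"
    then have "r < length (lam @ [x])" "snd ((lam @ [x]) ! r)"
      by (auto simp: nth_append)
    then have "fst ((lam @ [x]) ! r') \<noteq> fst ((lam @ [x]) ! r)"
      using snoc r(3) unfolding is_overpartition_def by blast
    then show "fst (lam ! r') \<noteq> fst (lam ! r)"
      using r by (simp add: nth_append)
  qed
qed

lemma is_overpartition_snoc_zero:
  assumes "is_overpartition lam" "fst x = 0"
    and "snd x \<Longrightarrow> \<forall>r<length lam. fst (lam ! r) \<noteq> 0"
  shows "is_overpartition (lam @ [x])"
  unfolding is_overpartition_def
proof (intro conjI allI impI)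
  fix r assume r: "Suc r < length (lam @ [x])"
  show "fst ((lam @ [x]) ! Suc r) \<le> fst ((lam @ [x]) ! r)"
  proof (cases "Suc r < length lam")
    case True
    then show ?thesis using assms(1) unfolding is_overpartition_def by (simp add: nth_append)
  next
    case False
    then show ?thesis using r assms(2) by (simp add: nth_append)
  qed
next
  fix r r' assume r: "r < length (lam @ [x])" "snd ((lam @ [x]) ! r)" "r' < r"
  show "fst ((lam @ [x]) ! r') \<noteq> fst ((lam @ [x]) ! r)"
  proof (cases "r < length lam")
    case True
    then show ?thesis using assms(1) r unfolding is_overpartition_def by (simp add: nth_append)
  next
    case False
    then have "r = length lam" using r by simp
    then show ?thesis using assms(2,3) r by (simp add: nth_append)
  qed
qed

lemma overpartition_parts_pos:
  assumes "is_overpartition lam" "lam \<noteq> []" "0 < fst (last lam)"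
  shows "\<forall>x\<in>set lam. 0 < fst x"
proof
  fix x assume "x \<in> set lam"
  then obtain r where r: "r < length lam" "x = lam ! r" by (auto simp: in_set_conv_nth)
  have "fst (lam ! (length lam - 1)) \<le> fst (lam ! r)"
    using is_overpartition_nth_antimono[OF assms(1)] r by simp
  then show "0 < fst x"
    using assms(2,3) r by (simp add: last_conv_nth)
qed

lemma overpartition_butlast_parts_pos:
  assumes "is_overpartition lam" "lam \<noteq> []" "last lam = (0, True)"
  shows "\<forall>x\<in>set (butlast lam). 0 < fst x"
proof
  fix x assume "x \<in> set (butlast lam)"
  then obtain r where r: "r < length lam - 1" "x = lam ! r"
    by (auto simp: in_set_conv_nth nth_butlast)
  have "lam ! (length lam - 1) = (0, True)"
    using assms(2,3) by (simp add: last_conv_nth)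
  then show "0 < fst x"
    using assms(1) r unfolding is_overpartition_def
    by (metis diff_less fst_conv gr0I length_greater_0_conv less_one snd_conv assms(2))
qed

text \<open>Condition (2) of \<open>O(i,j,k)\<close>, rewritten as a single inequality on every part.\<close>
definition Q_set :: "nat \<Rightarrow> nat \<Rightarrow> (nat \<times> bool) list set" where
  "Q_set j k = {lam. is_overpartition lam \<and> length lam = k \<and>
      (\<forall>r<k. fst (lam ! r) + k \<le> j + ol_after lam r)}"

lemma Q_set_part_less: "lam \<in> Q_set j k \<Longrightarrow> r < k \<Longrightarrow> fst (lam ! r) < j"
  using ol_after_le[of lam r] unfolding Q_set_def by force

lemma Q_set_length_le: "lam \<in> Q_set j k \<Longrightarrow> k \<le> j"
proof (cases k)
  case (Suc m)
  assume "lam \<in> Q_set j k"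
  then have "fst (lam ! m) + k \<le> j + ol_after lam m" "length lam = k"
    using Suc unfolding Q_set_def by auto
  with ol_after_le[of lam m] Suc show ?thesis by simp
qed simp

lemma O_set_eq_Q_set: "O_set i j k = Q_set j k"
proof (intro set_eqI iffI)
  fix lam assume "lam \<in> O_set i j k"
  then have ov: "is_overpartition lam" and len: "length lam = k"
    and less: "\<forall>r<k. fst (lam ! r) < j"
    and cond: "k \<ge> 2 \<longrightarrow> (\<forall>s \<in> {1..k-1}. \<forall>r < k. fst (lam ! r) = j - s \<longrightarrow>
          card {r'. r < r' \<and> r' < k \<and> snd (lam ! r')} \<ge> k - s)"
    unfolding O_set_def by auto
  have "fst (lam ! r) + k \<le> j + ol_after lam r" if r: "r < k" for r
  proof (cases "fst (lam ! r) + k \<le> j")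
    case False
    define s where "s = j - fst (lam ! r)"
    have "fst (lam ! r) < j" using less r by simp
    with False have "k \<ge> 2" "s \<in> {1..k-1}" "fst (lam ! r) = j - s"
      unfolding s_def by auto
    with cond r have "card {r'. r < r' \<and> r' < k \<and> snd (lam ! r')} \<ge> k - s" by blast
    with \<open>fst (lam ! r) < j\<close> show ?thesis unfolding ol_after_def len s_def by linarith
  qed simp
  with ov len show "lam \<in> Q_set j k" unfolding Q_set_def by auto
next
  fix lam assume Q: "lam \<in> Q_set j k"
  then have ov: "is_overpartition lam" and len: "length lam = k"
    and ineq: "\<forall>r<k. fst (lam ! r) + k \<le> j + ol_after lam r" unfolding Q_set_def by auto
  have "card {r'. r < r' \<and> r' < k \<and> snd (lam ! r')} \<ge> k - s"
    if "r < k" "fst (lam ! r) = j - s" for s r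
    using that ineq Q_set_part_less[OF Q \<open>r < k\<close>] unfolding ol_after_def len
    by (cases "s \<le> j") auto
  with ov len Q_set_part_less[OF Q] show "lam \<in> O_set i j k"
    unfolding O_set_def by auto
qed

lemma Q_set_map_shift_iff: "map shift_part mu \<in> Q_set (Suc j) k \<longleftrightarrow> mu \<in> Q_set j k"
  unfolding Q_set_def
  by (auto simp: is_overpartition_map_shift ol_after_map shift_part_def)

lemma Q_set_snoc_iff:
  assumes part: "\<And>r. r < length mu \<Longrightarrow> fst (f (mu ! r)) = fst (mu ! r) + (if b then 1 else 0)"
    and ol: "\<And>x. snd (f x) = snd x"
    and ov: "is_overpartition (map f mu @ [(0, b)]) \<longleftrightarrow> is_overpartition mu"
  shows "map f mu @ [(0, b)] \<in> Q_set (Suc j) (Suc m) \<longleftrightarrow> mu \<in> Q_set j m"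
proof -
  let ?lam = "map f mu @ [(0, b)]"
  have ineq_iff: "fst (?lam ! r) + Suc (length mu) \<le> Suc j + ol_after ?lam r
      \<longleftrightarrow> fst (mu ! r) + length mu \<le> j + ol_after mu r" if "r < length mu" for r
    using that part[OF that] ol_after_map[of f, OF ol] by (simp add: nth_append ol_after_snoc)
  have last: "fst (?lam ! length mu) + Suc (length mu) \<le> Suc j + ol_after ?lam (length mu)
      \<longleftrightarrow> length mu \<le> j"
    using ol_after_le[of ?lam "length mu"] by (simp add: nth_append)
  show ?thesis
  proof
    assume lam: "?lam \<in> Q_set (Suc j) (Suc m)"
    then have len: "length mu = m" unfolding Q_set_def by simp
    have "fst (mu ! r) + m \<le> j + ol_after mu r" if "r < m" for r
      using lam that ineq_iff[of r] unfolding Q_set_def len by auto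
    with lam ov len show "mu \<in> Q_set j m" unfolding Q_set_def by auto
  next
    assume mu: "mu \<in> Q_set j m"
    then have len: "length mu = m" unfolding Q_set_def by simp
    have "m \<le> j" using Q_set_length_le[OF mu] .
    have "fst (?lam ! r) + Suc m \<le> Suc j + ol_after ?lam r" if "r < Suc m" for r
    proof (cases "r < m")
      case True
      with mu ineq_iff[of r] show ?thesis unfolding Q_set_def len by auto
    next
      case False
      with that last \<open>m \<le> j\<close> show ?thesis unfolding len by (simp add: less_Suc_eq)
    qed
    with mu ov len show "?lam \<in> Q_set (Suc j) (Suc m)" unfolding Q_set_def by auto
  qed
qed

lemma Q_set_snoc_zero_iff: "mu @ [(0, False)] \<in> Q_set (Suc j) (Suc m) \<longleftrightarrow> mu \<in> Q_set j m"
  using Q_set_snoc_iff[of mu id False]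
    is_overpartition_snocD[of mu] is_overpartition_snoc_zero[of mu "(0, False)"]
  by auto

lemma Q_set_shift_snoc_zero_ol_iff:
  "map shift_part mu @ [(0, True)] \<in> Q_set (Suc j) (Suc m) \<longleftrightarrow> mu \<in> Q_set j m"
proof (rule Q_set_snoc_iff)
  show "is_overpartition (map shift_part mu @ [(0, True)]) \<longleftrightarrow> is_overpartition mu"
    using is_overpartition_snocD[of "map shift_part mu"]
      is_overpartition_snoc_zero[of "map shift_part mu" "(0, True)"]
    by (auto simp: is_overpartition_map_shift shift_part_def)
qed (simp_all add: shift_part_def)

lemma Q_set_Suc_Suc:
  "Q_set (Suc j) (Suc m) = map shift_part ` Q_set j (Suc m)
     \<union> (\<lambda>mu. mu @ [(0, False)]) ` Q_set j m
     \<union> (\<lambda>mu. map shift_part mu @ [(0, True)]) ` Q_set j m"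
  (is "_ = ?A \<union> ?B \<union> ?C")
proof (intro set_eqI iffI)
  fix lam assume lam: "lam \<in> Q_set (Suc j) (Suc m)"
  then have ov: "is_overpartition lam" and ne: "lam \<noteq> []" unfolding Q_set_def by auto
  then have split: "lam = butlast lam @ [last lam]" by simp
  consider "0 < fst (last lam)" | "last lam = (0, False)" | "last lam = (0, True)"
    by (metis gr0I prod.collapse)
  then show "lam \<in> ?A \<union> ?B \<union> ?C"
  proof cases
    case 1
    then have "map shift_part (map unshift_part lam) = lam"
      using overpartition_parts_pos[OF ov ne] shift_unshift_parts by blast
    with lam Q_set_map_shift_iff show ?thesis by (metis UnI1 image_eqI)
  next
    case 2
    with split lam Q_set_snoc_zero_iff show ?thesis by (metis UnI1 UnI2 image_eqI)
  next
    case 3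
    then have "map shift_part (map unshift_part (butlast lam)) @ [(0, True)] = lam"
      using overpartition_butlast_parts_pos[OF ov ne] shift_unshift_parts split by metis
    with lam Q_set_shift_snoc_zero_ol_iff show ?thesis by (metis UnI2 image_eqI)
  qed
next
  fix lam assume "lam \<in> ?A \<union> ?B \<union> ?C"
  then show "lam \<in> Q_set (Suc j) (Suc m)"
    using Q_set_map_shift_iff Q_set_snoc_zero_iff Q_set_shift_snoc_zero_ol_iff by auto
qed

lemma Q_set_Suc_Suc_disjoint:
  fixes j m :: nat
  defines "A \<equiv> map shift_part ` Q_set j (Suc m)"
    and "B \<equiv> (\<lambda>mu. mu @ [(0, False)]) ` Q_set j m"
    and "C \<equiv> (\<lambda>mu. map shift_part mu @ [(0, True)]) ` Q_set j m"
  shows "A \<inter> B = {}" and "(A \<union> B) \<inter> C = {}"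
proof -
  have last_A: "0 < fst (last lam)" if "lam \<in> A" for lam
  proof -
    from that obtain mu where "mu \<in> Q_set j (Suc m)" "lam = map shift_part mu"
      unfolding A_def by blast
    moreover from this have "mu \<noteq> []" unfolding Q_set_def by auto
    ultimately show ?thesis by (simp add: last_map shift_part_def)
  qed
  have last_B: "last lam = (0, False)" if "lam \<in> B" for lam
    using that unfolding B_def by auto
  have last_C: "last lam = (0, True)" if "lam \<in> C" for lam
    using that unfolding C_def by auto
  show "A \<inter> B = {}"
    using last_A last_B by fastforce
  show "(A \<union> B) \<inter> C = {}"
    using last_A last_B last_C by fastforce
qed

lemma finite_Q_set: "finite (Q_set j k)"
proof (rule finite_subset)
  show "Q_set j k \<subseteq> {xs. set xs \<subseteq> {0..<j} \<times> UNIV \<and> length xs = k}"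
  proof
    fix xs assume xs: "xs \<in> Q_set j k"
    then have "length xs = k" unfolding Q_set_def by simp
    with Q_set_part_less[OF xs] have "set xs \<subseteq> {0..<j} \<times> UNIV"
      by (auto simp: in_set_conv_nth) (metis fst_conv)
    with \<open>length xs = k\<close> show "xs \<in> {xs. set xs \<subseteq> {0..<j} \<times> UNIV \<and> length xs = k}"
      by simp
  qed
  show "finite {xs. set xs \<subseteq> {0..<j} \<times> (UNIV :: bool set) \<and> length xs = k}"
    by (rule finite_lists_length_eq) simp
qed

lemma Q_set_0: "Q_set j 0 = {[]}"
  unfolding Q_set_def is_overpartition_def by auto

lemma Q_set_0_Suc: "Q_set 0 (Suc m) = {}"
  using Q_set_length_le by fastforce

definition op_weight :: "int poly \<Rightarrow> (nat \<times> bool) list \<Rightarrow> int poly" where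
  "op_weight a lam = a ^ op_ol lam * qX ^ op_size lam"

definition Q_gf :: "nat \<Rightarrow> nat \<Rightarrow> int poly \<Rightarrow> int poly" where
  "Q_gf j k a = (\<Sum>lam \<in> Q_set j k. op_weight a lam)"

lemma op_weight_map_shift: "op_weight a (map shift_part mu) = qX ^ length mu * op_weight a mu"
  by (induction mu) (auto simp: op_weight_def op_ol_def op_size_def shift_part_def power_add)

lemma op_weight_snoc_zero: "op_weight a (mu @ [(0, b)]) = (if b then a else 1) * op_weight a mu"
  by (auto simp: op_weight_def op_ol_def op_size_def)

lemma Q_gf_Suc_Suc:
  "Q_gf (Suc j) (Suc m) a = qX ^ Suc m * Q_gf j (Suc m) a + (1 + a * qX ^ m) * Q_gf j m a"
proof -
  let ?A = "map shift_part ` Q_set j (Suc m)"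
  let ?B = "(\<lambda>mu. mu @ [(0, False)]) ` Q_set j m"
  let ?C = "(\<lambda>mu. map shift_part mu @ [(0, True)]) ` Q_set j m"
  note disjoint = Q_set_Suc_Suc_disjoint[of j m]
  have "Q_gf (Suc j) (Suc m) a
      = sum (op_weight a) ?A + sum (op_weight a) ?B + sum (op_weight a) ?C"
    unfolding Q_gf_def Q_set_Suc_Suc using disjoint by (simp add: finite_Q_set sum.union_disjoint)
  also have "sum (op_weight a) ?A = (\<Sum>mu \<in> Q_set j (Suc m). op_weight a (map shift_part mu))"
    by (rule sum.reindex[OF inj_on_subset[OF inj_map_shift_part], simplified])
  also have "\<dots> = qX ^ Suc m * Q_gf j (Suc m) a"
    unfolding Q_gf_def sum_distrib_left
    by (rule sum.cong) (simp_all add: op_weight_map_shift Q_set_def)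
  also have "sum (op_weight a) ?B = (\<Sum>mu \<in> Q_set j m. op_weight a (mu @ [(0, False)]))"
    by (rule sum.reindex[simplified]) (simp add: inj_on_def)
  also have "\<dots> = Q_gf j m a"
    by (simp add: op_weight_snoc_zero Q_gf_def)
  also have "sum (op_weight a) ?C = (\<Sum>mu \<in> Q_set j m. op_weight a (map shift_part mu @ [(0, True)]))"
    by (rule sum.reindex[simplified]) (simp add: inj_on_def inj_eq[OF inj_map_shift_part])
  also have "\<dots> = a * qX ^ m * Q_gf j m a"
    unfolding Q_gf_def sum_distrib_left
    by (rule sum.cong) (simp_all add: op_weight_snoc_zero op_weight_map_shift Q_set_def)
  finally show ?thesis by (simp add: algebra_simps)
qed

lemma Q_gf_0: "Q_gf j 0 a = 1"
  by (simp add: Q_gf_def Q_set_0 op_weight_def op_ol_def op_size_def)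

lemma Q_gf_eq: "Q_gf j k a = gauss_binom j k * (\<Prod>t<k. 1 + a * qX ^ t)"
proof (induction j arbitrary: k)
  case 0
  then show ?case by (cases k) (simp add: Q_gf_0, simp add: Q_gf_def Q_set_0_Suc)
next
  case (Suc j)
  then show ?case by (cases k) (simp_all add: Q_gf_0 Q_gf_Suc_Suc algebra_simps)
qed

lemma O_all_summand_eq_op_weight:
  "(-1) ^ op_ol lam * qX ^ (op_size lam + op_ol lam * (i - length lam + 1))
     * qX ^ ((i - length lam) * (j - length lam))
   = op_weight (- (qX ^ (i - length lam + 1))) lam * qX ^ ((i - length lam) * (j - length lam))"
proof -
  let ?c = "i - length lam + 1"
  have "(- (qX ^ ?c)) ^ op_ol lam = (-1) ^ op_ol lam * (qX ^ ?c) ^ op_ol lam"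
    by (rule power_minus)
  also have "(qX ^ ?c) ^ op_ol lam = qX ^ (op_ol lam * ?c)"
    by (simp only: power_mult[symmetric] mult.commute)
  finally show ?thesis unfolding op_weight_def power_add by (simp only: mult_ac)
qed

theorem theorem2p2:
  fixes i j :: nat
  assumes "j \<le> i"
  shows "(\<Sum>k = 0..j. qpoch (qX ^ (i - k + 1)) k * qbinom j k * qX ^ ((i - k) * (j - k)))
       = (\<Sum>lam \<in> O_all i j.
            (-1) ^ op_ol lam
            * qX ^ (op_size lam + op_ol lam * (i - length lam + 1))
            * qX ^ ((i - length lam) * (j - length lam)))"
proof -
  have term_k: "qpoch (qX ^ (i - k + 1)) k * qbinom j k = Q_gf j k (- (qX ^ (i - k + 1)))"
    if "k \<le> j" for k
    using that by (simp add: Q_gf_eq qbinom_eq_gauss_binom qpoch_def mult.commute)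
  have "O_all i j = (\<Union>k\<in>{0..j}. Q_set j k)"
    by (simp add: O_all_def O_set_eq_Q_set)
  moreover have "Q_set j k \<inter> Q_set j k' = {}" if "k \<noteq> k'" for k k'
    using that unfolding Q_set_def by auto
  ultimately have O_all_sum: "(\<Sum>lam \<in> O_all i j. f lam) = (\<Sum>k = 0..j. \<Sum>lam \<in> Q_set j k. f lam)"
    for f :: "(nat \<times> bool) list \<Rightarrow> int poly"
    by (simp add: sum.UNION_disjoint finite_Q_set)
  have "(\<Sum>k = 0..j. qpoch (qX ^ (i - k + 1)) k * qbinom j k * qX ^ ((i - k) * (j - k)))
      = (\<Sum>k = 0..j. Q_gf j k (- (qX ^ (i - k + 1))) * qX ^ ((i - k) * (j - k)))"
    by (rule sum.cong[OF refl]) (simp only: atLeastAtMost_iff term_k)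
  also have "\<dots> = (\<Sum>k = 0..j. \<Sum>lam \<in> Q_set j k.
      op_weight (- (qX ^ (i - length lam + 1))) lam * qX ^ ((i - length lam) * (j - length lam)))"
    unfolding Q_gf_def sum_distrib_right by (intro sum.cong) (auto simp: Q_set_def)
  finally show ?thesis
    unfolding O_all_summand_eq_op_weight O_all_sum .
qed

end
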